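(* For every integer $k \geq 3$ there exists an instance $H=(V,E,C,\ell)$ of \textsc{MinECC} with $k$ colors, all edge weights equal to $1$, and rank $r = k-1$ (so $k = r+1$), such that the optimal \textsc{MinECC} value (minimum number of mistakes over all node colorings) is $k-1 = r$, while the optimal value of the \textsc{MinECC} LP relaxation on $H$ is $\frac{k}{2} = \frac{r+1}{2}$. Consequently the integrality gap of the \textsc{MinECC} LP relaxation is at least $2\left(1-\frac1k\right) = 2\left(1-\frac{1}{r+1}\right)$.
   Context: An edge-colored hypergraph is $H=(V,E,C,\ell)$ with finite node set $V$, a multiset $E$ of nonempty subsets of $V$ (edges), a color set $C=[k]=\{1,\dots,k\}$, a map $\ell\colon E\to C$, and weights $w_e\ge 0$ for $e\in E$. The rank $r$ is $\max_{e\in E}|e|$. A node coloring is a map $Y\colon V\to C$; it makes a mistake at $e$ (written $e\in\mathcal M_Y$) if some $v\in e$ has $Y[v]\neq \ell(e)$. The \textsc{MinECC} problem is to minimize $\sum_{e\in E} w_e \mathbb 1[e\in\mathcal M_Y]$ over all $Y$. The \textsc{MinECC} LP relaxation has variables $x_v^i$ ($v\in V$, $i\in C$) and $x_e$ ($e\in E$) and is: minimize $\sum_{e\in E} w_e x_e$ subject to $\sum_{i=1}^k x_v^i = k-1$ for all $v\in V$; $x_e \ge x_v^{\ell(e)}$ for all $e\in E$ and $v\in e$; $0\le x_v^i\le 1$; $0\le x_e\le 1$. *)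

theory Defs
  imports Main "HOL.Real"
begin

text \<open>An edge-colored hypergraph with node set V, edges indexed by a finite index set E
  (so that repeated edges -- a multiset -- are allowed), edge e has node set edge e
  and color lab e, color set {1..k}, weights w.\<close>

definition ecc_instance :: "'v set \<Rightarrow> 'e set \<Rightarrow> ('e \<Rightarrow> 'v set) \<Rightarrow> ('e \<Rightarrow> nat) \<Rightarrow> ('e \<Rightarrow> real) \<Rightarrow> nat \<Rightarrow> bool" where
  "ecc_instance V E edge lab w k \<longleftrightarrow>
     finite V \<and> finite E \<and>
     (\<forall>e\<in>E. edge e \<noteq> {} \<and> edge e \<subseteq> V \<and> lab e \<in> {1..k} \<and> w e \<ge> 0)"

definition ecc_rank :: "'e set \<Rightarrow> ('e \<Rightarrow> 'v set) \<Rightarrow> nat" where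
  "ecc_rank E edge = Max ((\<lambda>e. card (edge e)) ` E)"

definition node_coloring :: "'v set \<Rightarrow> nat \<Rightarrow> ('v \<Rightarrow> nat) \<Rightarrow> bool" where
  "node_coloring V k Y \<longleftrightarrow> (\<forall>v\<in>V. Y v \<in> {1..k})"

definition mistake :: "('e \<Rightarrow> 'v set) \<Rightarrow> ('e \<Rightarrow> nat) \<Rightarrow> ('v \<Rightarrow> nat) \<Rightarrow> 'e \<Rightarrow> bool" where
  "mistake edge lab Y e \<longleftrightarrow> (\<exists>v\<in>edge e. Y v \<noteq> lab e)"

definition ecc_cost :: "'e set \<Rightarrow> ('e \<Rightarrow> 'v set) \<Rightarrow> ('e \<Rightarrow> nat) \<Rightarrow> ('e \<Rightarrow> real) \<Rightarrow> ('v \<Rightarrow> nat) \<Rightarrow> real" where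
  "ecc_cost E edge lab w Y = (\<Sum>e\<in>E. w e * (if mistake edge lab Y e then 1 else 0))"

definition ecc_opt :: "'v set \<Rightarrow> 'e set \<Rightarrow> ('e \<Rightarrow> 'v set) \<Rightarrow> ('e \<Rightarrow> nat) \<Rightarrow> ('e \<Rightarrow> real) \<Rightarrow> nat \<Rightarrow> real" where
  "ecc_opt V E edge lab w k = Inf {ecc_cost E edge lab w Y | Y. node_coloring V k Y}"

text \<open>Feasibility for the MinECC LP relaxation; xv v i is x_v^i, xe e is x_e.\<close>
definition lp_feasible :: "'v set \<Rightarrow> 'e set \<Rightarrow> ('e \<Rightarrow> 'v set) \<Rightarrow> ('e \<Rightarrow> nat) \<Rightarrow> nat
     \<Rightarrow> ('v \<Rightarrow> nat \<Rightarrow> real) \<Rightarrow> ('e \<Rightarrow> real) \<Rightarrow> bool" where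
  "lp_feasible V E edge lab k xv xe \<longleftrightarrow>
     (\<forall>v\<in>V. (\<Sum>i\<in>{1..k}. xv v i) = real k - 1) \<and>
     (\<forall>e\<in>E. \<forall>v\<in>edge e. xe e \<ge> xv v (lab e)) \<and>
     (\<forall>v\<in>V. \<forall>i\<in>{1..k}. 0 \<le> xv v i \<and> xv v i \<le> 1) \<and>
     (\<forall>e\<in>E. 0 \<le> xe e \<and> xe e \<le> 1)"

definition lp_obj :: "'e set \<Rightarrow> ('e \<Rightarrow> real) \<Rightarrow> ('e \<Rightarrow> real) \<Rightarrow> real" where
  "lp_obj E w xe = (\<Sum>e\<in>E. w e * xe e)"

definition ecc_lp_opt :: "'v set \<Rightarrow> 'e set \<Rightarrow> ('e \<Rightarrow> 'v set) \<Rightarrow> ('e \<Rightarrow> nat) \<Rightarrow> ('e \<Rightarrow> real) \<Rightarrow> nat \<Rightarrow> real" where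
  "ecc_lp_opt V E edge lab w k =
     Inf {lp_obj E w xe | xv xe. lp_feasible V E edge lab k xv xe}"

end

theory Submission
  imports Defs "HOL-Library.Nat_Bijection"
begin

text \<open>Take one edge of each color \<open>i \<in> {1..k}\<close>, and one node for every pair \<open>{i, j}\<close> of colors,
  lying in exactly the edges \<open>i\<close> and \<open>j\<close>. Any two edges share a node and have different
  colors, so a coloring satisfies at most one edge and makes at least \<open>k - 1\<close> mistakes.
  In the LP, a node carries values \<open>x\<^sub>v\<^sup>i \<le> 1\<close> summing to \<open>k - 1\<close>, so any two of its values
  sum to at least \<open>1\<close>; hence \<open>x\<^sub>i + x\<^sub>j \<ge> 1\<close> for all pairs of edges, and averaging over pairs
  gives \<open>\<Sum>\<^sub>i x\<^sub>i \<ge> k/2\<close>, attained by setting every \<open>x\<^sub>e = 1/2\<close>.\<close>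

lemma sum_diff_singleton_add:
  fixes a :: "'a \<Rightarrow> real"
  assumes "finite I"
  shows "(\<Sum>i\<in>I. \<Sum>j\<in>I - {i}. a i + a j) = 2 * (real (card I) - 1) * sum a I"
proof -
  have "(\<Sum>j\<in>I - {i}. a i + a j) = (real (card I) - 1) * a i + (sum a I - a i)"
    if "i \<in> I" for i
  proof -
    have "card I \<ge> 1"
      using that assms by (metis One_nat_def Suc_leI card_gt_0_iff empty_iff)
    then show ?thesis
      using that assms by (simp add: sum.distrib sum_diff1 card_Diff_singleton of_nat_diff)
  qed
  then have "(\<Sum>i\<in>I. \<Sum>j\<in>I - {i}. a i + a j)
      = (\<Sum>i\<in>I. (real (card I) - 1) * a i + (sum a I - a i))"
    by (intro sum.cong) auto
  also have "\<dots> = (real (card I) - 1) * sum a I + (real (card I) * sum a I - sum a I)"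
    by (simp add: sum.distrib sum_subtractf sum_distrib_left[symmetric])
  also have "\<dots> = 2 * (real (card I) - 1) * sum a I"
    by (simp add: algebra_simps)
  finally show ?thesis .
qed

lemma sum_ge_half_card_if_pairwise_ge_one:
  fixes a :: "'a \<Rightarrow> real"
  assumes "finite I" and "card I \<ge> 2"
    and pairwise: "\<And>i j. i \<in> I \<Longrightarrow> j \<in> I \<Longrightarrow> i \<noteq> j \<Longrightarrow> 1 \<le> a i + a j"
  shows "real (card I) / 2 \<le> sum a I"
proof -
  have "real (card I) * (real (card I) - 1) = (\<Sum>i\<in>I. \<Sum>j\<in>I - {i}. (1::real))"
    using assms(1,2) by (simp add: card_Diff_singleton of_nat_diff)
  also have "\<dots> \<le> (\<Sum>i\<in>I. \<Sum>j\<in>I - {i}. a i + a j)"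
    using pairwise by (intro sum_mono) auto
  also have "\<dots> = 2 * (real (card I) - 1) * sum a I"
    using assms(1) by (rule sum_diff_singleton_add)
  finally have "(real (card I) - 1) * real (card I) \<le> (real (card I) - 1) * (2 * sum a I)"
    by (simp add: algebra_simps)
  moreover have "real (card I) - 1 > 0"
    using assms(2) by simp
  ultimately show ?thesis
    by simp
qed

lemma two_values_ge_one_if_sum_card_minus_one:
  fixes x :: "'a \<Rightarrow> real"
  assumes "finite I" and sum: "sum x I = real (card I) - 1"
    and le_one: "\<And>i. i \<in> I \<Longrightarrow> x i \<le> 1"
    and "a \<in> I" "b \<in> I" "a \<noteq> b"
  shows "1 \<le> x a + x b"
proof -
  have "sum x I = x a + sum x (I - {a})"
    using assms(1,4) by (rule sum.remove)
  also have "sum x (I - {a}) = x b + sum x (I - {a} - {b})"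
    using assms(1,4-6) by (intro sum.remove) auto
  finally have "sum x I = x a + x b + sum x (I - {a, b})"
    by (simp add: Diff_insert2[symmetric])
  moreover have "sum x (I - {a, b}) \<le> real (card (I - {a, b}))"
    using le_one sum_mono[of "I - {a, b}" x "\<lambda>_. 1"] by simp
  moreover have "card (I - {a, b}) = card I - 2"
    using assms(1,4-6) by (simp add: card_Diff_subset)
  moreover have "card I \<ge> 2"
    using assms(1,4-6) by (metis card_2_iff card_mono empty_subsetI insert_subset)
  ultimately show ?thesis
    using sum by (simp add: of_nat_diff)
qed

lemma lp_feasible_edges_sharing_node:
  assumes "lp_feasible V E edge lab k xv xe"
    and "e \<in> E" "e' \<in> E" "v \<in> V" "v \<in> edge e" "v \<in> edge e'"
    and "lab e \<in> {1..k}" "lab e' \<in> {1..k}" "lab e \<noteq> lab e'"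
  shows "1 \<le> xe e + xe e'"
proof -
  have "1 \<le> xv v (lab e) + xv v (lab e')"
    using assms(1,4,7-9) unfolding lp_feasible_def
    by (intro two_values_ge_one_if_sum_card_minus_one[of "{1..k}"]) auto
  also have "\<dots> \<le> xe e + xe e'"
    using assms(1-3,5,6) unfolding lp_feasible_def by (intro add_mono) auto
  finally show ?thesis .
qed

lemma same_lab_if_no_mistakes_share_node:
  assumes "\<not> mistake edge lab Y e" "\<not> mistake edge lab Y e'" "v \<in> edge e" "v \<in> edge e'"
  shows "lab e = lab e'"
  using assms unfolding mistake_def by metis

lemma ecc_cost_unit_weights:
  assumes "finite E"
  shows "ecc_cost E edge lab (\<lambda>_. 1) Y = real (card {e \<in> E. mistake edge lab Y e})"
  using assms unfolding ecc_cost_def by (simp add: sum.If_cases Int_def conj_commute)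

lemma ecc_opt_eqI:
  assumes "node_coloring V k Y" "ecc_cost E edge lab w Y = c"
    and "\<And>Y. node_coloring V k Y \<Longrightarrow> c \<le> ecc_cost E edge lab w Y"
  shows "ecc_opt V E edge lab w k = c"
  unfolding ecc_opt_def using assms by (intro cInf_eq_minimum) auto

lemma ecc_lp_opt_eqI:
  assumes "lp_feasible V E edge lab k xv xe" "lp_obj E w xe = c"
    and "\<And>yv ye. lp_feasible V E edge lab k yv ye \<Longrightarrow> c \<le> lp_obj E w ye"
  shows "ecc_lp_opt V E edge lab w k = c"
  unfolding ecc_lp_opt_def using assms by (intro cInf_eq_minimum) auto

definition pair_node :: "nat \<Rightarrow> nat \<Rightarrow> nat" where
  "pair_node i j = prod_encode (min i j, max i j)"

definition pair_edge :: "nat \<Rightarrow> nat \<Rightarrow> nat set" where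
  "pair_edge k i = pair_node i ` ({1..k} - {i})"

definition pair_nodes :: "nat \<Rightarrow> nat set" where
  "pair_nodes k = \<Union> (pair_edge k ` {1..k})"

lemma pair_node_commute: "pair_node i j = pair_node j i"
  unfolding pair_node_def by (simp add: min.commute max.commute)

lemma prod_decode_pair_node: "prod_decode (pair_node i j) = (min i j, max i j)"
  unfolding pair_node_def by simp

lemma inj_pair_node: "inj (pair_node i)"
  by (rule injI) (metis prod_decode_pair_node fst_conv snd_conv min_def max_def)

lemma pair_node_mem_pair_edge:
  assumes "i \<in> {1..k}" "j \<in> {1..k}" "i \<noteq> j"
  shows "pair_node i j \<in> pair_edge k i" "pair_node i j \<in> pair_edge k j"
proof -
  show "pair_node i j \<in> pair_edge k i"
    using assms unfolding pair_edge_def by (intro imageI) simp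
  have "pair_node j i \<in> pair_edge k j"
    using assms unfolding pair_edge_def by (intro imageI) simp
  then show "pair_node i j \<in> pair_edge k j"
    by (subst pair_node_commute)
qed

lemma mem_pair_nodes_iff:
  "v \<in> pair_nodes k \<longleftrightarrow> (\<exists>i\<in>{1..k}. \<exists>j\<in>{1..k}. i \<noteq> j \<and> v = pair_node i j)"
  unfolding pair_nodes_def pair_edge_def
  by (simp only: UN_iff image_iff Bex_def Diff_iff singleton_iff) metis

lemma card_pair_edge:
  assumes "i \<in> {1..k}"
  shows "card (pair_edge k i) = k - 1"
  using assms unfolding pair_edge_def
  by (simp add: card_image[OF inj_on_subset[OF inj_pair_node subset_UNIV]])

lemma ecc_instance_pair:
  assumes "k \<ge> 2"
  shows "ecc_instance (pair_nodes k) {1..k} (pair_edge k) (\<lambda>i. i) (\<lambda>_. 1) k"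
proof -
  have "pair_edge k i \<noteq> {}" if "i \<in> {1..k}" for i
    using that assms card_pair_edge[of i k] by fastforce
  then show ?thesis
    unfolding ecc_instance_def pair_nodes_def by (auto simp: pair_edge_def)
qed

lemma ecc_rank_pair:
  assumes "k \<ge> 1"
  shows "ecc_rank {1..k} (pair_edge k) = k - 1"
proof -
  have "(\<lambda>i. card (pair_edge k i)) ` {1..k} = {k - 1}"
    using assms card_pair_edge by force
  then show ?thesis
    unfolding ecc_rank_def by simp
qed

lemma pair_cost_ge:
  "real (k - 1) \<le> ecc_cost {1..k} (pair_edge k) (\<lambda>i. i) (\<lambda>_. 1) Y"
proof -
  let ?M = "{e \<in> {1..k}. mistake (pair_edge k) (\<lambda>i. i) Y e}"
  let ?G = "{e \<in> {1..k}. \<not> mistake (pair_edge k) (\<lambda>i. i) Y e}"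
  have "i = j" if "i \<in> ?G" "j \<in> ?G" for i j
  proof (rule ccontr)
    assume "i \<noteq> j"
    with that show False
      using same_lab_if_no_mistakes_share_node[of "pair_edge k" "\<lambda>i. i" Y i j "pair_node i j"]
        pair_node_mem_pair_edge[of i k j] by auto
  qed
  then have "card ?G \<le> 1"
    by (simp add: card_le_Suc0_iff_eq)
  moreover have "?M \<union> ?G = {1..k}"
    by auto
  then have "card ?M + card ?G = card {1..k}"
    by (metis (no_types, lifting) card_Un_disjoint disjoint_iff finite_Un
        finite_atLeastAtMost mem_Collect_eq)
  ultimately show ?thesis
    by (simp add: ecc_cost_unit_weights)
qed

lemma pair_cost_const_one:
  assumes "k \<ge> 2"
  shows "ecc_cost {1..k} (pair_edge k) (\<lambda>i. i) (\<lambda>_. 1) (\<lambda>_. 1) = real (k - 1)"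
proof -
  have "{e \<in> {1..k}. mistake (pair_edge k) (\<lambda>i. i) (\<lambda>_. 1) e} = {2..k}"
    using assms pair_node_mem_pair_edge[of _ k 1] unfolding mistake_def
    by (auto simp: pair_edge_def) fastforce
  then show ?thesis
    by (simp add: ecc_cost_unit_weights)
qed

lemma ecc_opt_pair:
  assumes "k \<ge> 2"
  shows "ecc_opt (pair_nodes k) {1..k} (pair_edge k) (\<lambda>i. i) (\<lambda>_. 1) k = real (k - 1)"
  using assms pair_cost_const_one[OF assms] pair_cost_ge[of k]
  by (intro ecc_opt_eqI[of _ _ "\<lambda>_. 1"]) (simp_all add: node_coloring_def)

text \<open>The node for \<open>{i, j}\<close> gets \<open>1/2\<close> on the colors \<open>i\<close> and \<open>j\<close> and \<open>1\<close> elsewhere.\<close>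
definition half_point :: "nat \<Rightarrow> nat \<Rightarrow> real" where
  "half_point v i = (if i = fst (prod_decode v) \<or> i = snd (prod_decode v) then 1/2 else 1)"

lemma sum_half_point:
  assumes "i \<in> {1..k}" "j \<in> {1..k}" "i \<noteq> j"
  shows "(\<Sum>l\<in>{1..k}. half_point (pair_node i j) l) = real k - 1"
proof -
  have "half_point (pair_node i j) l = 1 - (if l \<in> {i, j} then 1/2 else 0)" for l
    unfolding half_point_def prod_decode_pair_node by (auto simp: min_def max_def)
  moreover have "(\<Sum>l\<in>{1..k}. if l \<in> {i, j} then 1/2 else 0) = (\<Sum>l\<in>{1..k} \<inter> {i, j}. 1/2 :: real)"
    by (rule sum.inter_restrict[symmetric]) simp
  moreover have "{1..k} \<inter> {i, j} = {i, j}"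
    using assms by auto
  ultimately show ?thesis
    using assms by (simp add: sum_subtractf)
qed

lemma lp_feasible_half_point:
  assumes "k \<ge> 2"
  shows "lp_feasible (pair_nodes k) {1..k} (pair_edge k) (\<lambda>i. i) k half_point (\<lambda>_. 1/2)"
proof -
  have "half_point (pair_node e j) e \<le> 1/2" for e j
    unfolding half_point_def prod_decode_pair_node by (simp add: min_def max_def)
  then show ?thesis
    unfolding lp_feasible_def using sum_half_point
    by (auto simp: mem_pair_nodes_iff pair_edge_def half_point_def)
qed

lemma pair_lp_obj_ge:
  assumes "k \<ge> 2" "lp_feasible (pair_nodes k) {1..k} (pair_edge k) (\<lambda>i. i) k yv ye"
  shows "real k / 2 \<le> lp_obj {1..k} (\<lambda>_. 1) ye"
proof -
  have "1 \<le> ye i + ye j" if "i \<in> {1..k}" "j \<in> {1..k}" "i \<noteq> j" for i j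
  proof -
    have "pair_node i j \<in> pair_nodes k"
      using that unfolding mem_pair_nodes_iff by blast
    then show ?thesis
      using that pair_node_mem_pair_edge[OF that]
      by (intro lp_feasible_edges_sharing_node[OF assms(2)]) auto
  qed
  then show ?thesis
    using assms(1) sum_ge_half_card_if_pairwise_ge_one[of "{1..k}" ye]
    unfolding lp_obj_def by simp
qed

lemma ecc_lp_opt_pair:
  assumes "k \<ge> 2"
  shows "ecc_lp_opt (pair_nodes k) {1..k} (pair_edge k) (\<lambda>i. i) (\<lambda>_. 1) k = real k / 2"
  using assms lp_feasible_half_point pair_lp_obj_ge
  by (intro ecc_lp_opt_eqI) (auto simp: lp_obj_def)

theorem lemma1:
  fixes k :: nat
  assumes "k \<ge> 3"
  shows "\<exists>(V::nat set) (E::nat set) edge lab.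
           ecc_instance V E edge lab (\<lambda>_. 1) k \<and>
           ecc_rank E edge = k - 1 \<and>
           ecc_opt V E edge lab (\<lambda>_. 1) k = real (k - 1) \<and>
           ecc_lp_opt V E edge lab (\<lambda>_. 1) k = real k / 2 \<and>
           ecc_opt V E edge lab (\<lambda>_. 1) k / ecc_lp_opt V E edge lab (\<lambda>_. 1) k
             = 2 * (1 - 1 / real k)"
proof (intro exI conjI)
  have "k \<ge> 2"
    using assms by simp
  then show "ecc_instance (pair_nodes k) {1..k} (pair_edge k) (\<lambda>i. i) (\<lambda>_. 1) k"
    by (rule ecc_instance_pair)
  from \<open>k \<ge> 2\<close> show "ecc_rank {1..k} (pair_edge k) = k - 1"
    by (intro ecc_rank_pair) simp
  from \<open>k \<ge> 2\<close> show opt: "ecc_opt (pair_nodes k) {1..k} (pair_edge k) (\<lambda>i. i) (\<lambda>_. 1) k = real (k - 1)"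
    by (rule ecc_opt_pair)
  from \<open>k \<ge> 2\<close> show lp: "ecc_lp_opt (pair_nodes k) {1..k} (pair_edge k) (\<lambda>i. i) (\<lambda>_. 1) k = real k / 2"
    by (rule ecc_lp_opt_pair)
  show "ecc_opt (pair_nodes k) {1..k} (pair_edge k) (\<lambda>i. i) (\<lambda>_. 1) k
      / ecc_lp_opt (pair_nodes k) {1..k} (pair_edge k) (\<lambda>i. i) (\<lambda>_. 1) k = 2 * (1 - 1 / real k)"
    using assms unfolding opt lp by (simp add: of_nat_diff field_simps)
qed

end
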